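(* Let $\mathcal{A}\subseteq\mathbb{R}^3$ and let $\varphi_1,\ldots,\varphi_N\in L^2(\mathcal{A})$ be pairwise non-parallel with $\boldsymbol{\Psi}=\int_{\mathcal{A}}\boldsymbol{\varphi}^{\mathsf{H}}\boldsymbol{\varphi}\,\mathrm{d}\mathbf{r}$ positive definite, $\boldsymbol{\varphi}(\mathbf{r})=[\varphi_1(\mathbf{r}),\ldots,\varphi_N(\mathbf{r})]$, eigendecomposition $\boldsymbol{\Psi}=\mathbf{U}\,\mathrm{diag}(\lambda_1,\ldots,\lambda_N)\mathbf{U}^{\mathsf{H}}$, $\lambda_n>0$. For Hermitian $\mathbf{M}$ let $T_{\mathbf{M}}$ be the operator on $L^2(\mathcal{A})$ with kernel $\delta(\mathbf{r}-\mathbf{r}')-\boldsymbol{\varphi}(\mathbf{r})\mathbf{M}\boldsymbol{\varphi}^{\mathsf{H}}(\mathbf{r}')$. Let $C_\varphi=T_{-\mathbf{I}_N}$, $\overline{C}_\varphi=T_{(\mathbf{I}_N+\boldsymbol{\Psi})^{-1}}$, $\overline{B}_\varphi=T_{\overline{\mathbf{B}}_{\boldsymbol\Psi}}$ with $\overline{\mathbf{B}}_{\boldsymbol\Psi}=\mathbf{U}\,\mathrm{diag}\big(\tfrac{1+\sqrt{1+\lambda_n}}{\lambda_n\sqrt{1+\lambda_n}}\big)\mathbf{U}^{\mathsf{H}}$, and $B_\varphi=T_{\mathbf{B}_{\boldsymbol\Psi}}$ with $\mathbf{B}_{\boldsymbol\Psi}=\mathbf{U}\,\mathrm{diag}\big(\tfrac{1+\sqrt{1+\lambda_n}}{\lambda_n}\big)\mathbf{U}^{\mathsf{H}}$.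 Then $\overline{B}_\varphi\overline{B}_\varphi=\overline{C}_\varphi$ and $B_\varphi B_\varphi=C_\varphi$, i.e. $\int_{\mathcal{A}}\overline{B}_\varphi(\mathbf{r}_1,\mathbf{r})\overline{B}_\varphi(\mathbf{r},\mathbf{r}_2)\,\mathrm{d}\mathbf{r}=\overline{C}_\varphi(\mathbf{r}_1,\mathbf{r}_2)$ and $\int_{\mathcal{A}}B_\varphi(\mathbf{r}_1,\mathbf{r})B_\varphi(\mathbf{r},\mathbf{r}_2)\,\mathrm{d}\mathbf{r}=C_\varphi(\mathbf{r}_1,\mathbf{r}_2)$.
   Context: Kernels containing $\delta(\mathbf{r}-\mathbf{r}')$ denote the identity plus a finite-rank integral operator. *)

theory Defs
  imports "HOL-Analysis.Analysis"
begin

definition ctrans :: "complex^'n^'m \<Rightarrow> complex^'m^'n" where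
  "ctrans U = (\<chi> i j. cnj (U $ j $ i))"

definition rdiag :: "('n::finite \<Rightarrow> real) \<Rightarrow> complex^'n^'n" where
  "rdiag d = (\<chi> i j. if i = j then complex_of_real (d i) else 0)"

definition in_L2 :: "(real^3) set \<Rightarrow> (real^3 \<Rightarrow> complex) \<Rightarrow> bool" where
  "in_L2 A f \<longleftrightarrow> f \<in> borel_measurable (lebesgue_on A)
                 \<and> integrable (lebesgue_on A) (\<lambda>r. (cmod (f r))\<^sup>2)"

definition gram :: "(real^3) set \<Rightarrow> ('n::finite \<Rightarrow> real^3 \<Rightarrow> complex) \<Rightarrow> complex^'n^'n" where
  "gram A \<phi> = (\<chi> i j. integral\<^sup>L (lebesgue_on A) (\<lambda>r. cnj (\<phi> i r) * \<phi> j r))"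

text \<open>The operator T_M on L2(A) with kernel delta(r - r') - phi(r) M phi^H(r'),
  i.e. identity minus the finite-rank integral operator.\<close>
definition Top :: "(real^3) set \<Rightarrow> ('n::finite \<Rightarrow> real^3 \<Rightarrow> complex) \<Rightarrow> complex^'n^'n
                   \<Rightarrow> (real^3 \<Rightarrow> complex) \<Rightarrow> (real^3 \<Rightarrow> complex)" where
  "Top A \<phi> M f = (\<lambda>r. f r - (\<Sum>i\<in>UNIV. \<Sum>j\<in>UNIV. \<phi> i r * M $ i $ j *
        integral\<^sup>L (lebesgue_on A) (\<lambda>r'. cnj (\<phi> j r') * f r')))"

end

theory Submission
  imports Defs
begin

text \<open>Write \<open>T\<^sub>M f = f - \<Sum>\<^sub>i \<phi>\<^sub>i (M c(f))\<^sub>i\<close> with the coefficient vector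
  \<open>c(f)\<^sub>j = \<langle>\<phi>\<^sub>j, f\<rangle>\<close>. Since \<open>c(T\<^sub>N f) = c(f) - \<Psi> N c(f)\<close>, composition of these
  operators is governed by matrix algebra: \<open>T\<^sub>M T\<^sub>N = T\<^bsub>M + N - M \<Psi> N\<^esub>\<close>.
  When \<open>M\<close> is diagonalised by the eigenbasis \<open>U\<close> of \<open>\<Psi>\<close> with eigenvalues \<open>m\<^sub>n\<close>, the matrix
  \<open>2M - M \<Psi> M\<close> has eigenvalues \<open>2m - \<lambda>m\<^sup>2 = (1 - (1 - \<lambda>m)\<^sup>2) / \<lambda>\<close>. For \<open>B\<^sub>\<Psi>\<close> one has
  \<open>1 - \<lambda>m = -\<surd>(1+\<lambda>)\<close>, giving \<open>-1\<close>; for the barred matrix \<open>1 - \<lambda>m = -1/\<surd>(1+\<lambda>)\<close>,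
  giving \<open>1/(1+\<lambda>)\<close>, the eigenvalues of \<open>(I + \<Psi>)\<^sup>-\<^sup>1\<close>.\<close>

definition inner_coeffs ::
    "(real^3) set \<Rightarrow> ('n::finite \<Rightarrow> real^3 \<Rightarrow> complex) \<Rightarrow> (real^3 \<Rightarrow> complex) \<Rightarrow> complex^'n" where
  "inner_coeffs A \<phi> f = (\<chi> j. integral\<^sup>L (lebesgue_on A) (\<lambda>r. cnj (\<phi> j r) * f r))"

lemma Top_eq_inner_coeffs:
  "Top A \<phi> M f r = f r - (\<Sum>i\<in>UNIV. \<phi> i r * (M *v inner_coeffs A \<phi> f) $ i)"
  unfolding Top_def inner_coeffs_def matrix_vector_mult_def
  by (simp add: sum_distrib_left mult.assoc)

lemma integrable_cnj_mult_in_L2: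
  assumes f: "in_L2 A f" and g: "in_L2 A g"
  shows "integrable (lebesgue_on A) (\<lambda>r. cnj (f r) * g r)"
proof (rule Bochner_Integration.integrable_bound)
  show "integrable (lebesgue_on A) (\<lambda>r. (cmod (f r))\<^sup>2 + (cmod (g r))\<^sup>2)"
    using f g unfolding in_L2_def by auto
  have fm: "f \<in> borel_measurable (lebesgue_on A)" and gm: "g \<in> borel_measurable (lebesgue_on A)"
    using f g unfolding in_L2_def by auto
  have "(\<lambda>r. cnj (f r)) \<in> borel_measurable (lebesgue_on A)"
    by (rule measurable_compose[OF fm borel_measurable_continuous_onI]) (intro continuous_intros)
  then show "(\<lambda>r. cnj (f r) * g r) \<in> borel_measurable (lebesgue_on A)"
    using gm by measurable
  show "AE r in lebesgue_on A. norm (cnj (f r) * g r) \<le> norm ((cmod (f r))\<^sup>2 + (cmod (g r))\<^sup>2)"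
  proof (rule AE_I2)
    fix r
    have "cmod (f r) * cmod (g r) \<le> (cmod (f r))\<^sup>2 + (cmod (g r))\<^sup>2"
      using sum_squares_bound[of "cmod (f r)" "cmod (g r)"]
        mult_nonneg_nonneg[OF norm_ge_zero norm_ge_zero, of "f r" "g r"] by linarith
    then show "norm (cnj (f r) * g r) \<le> norm ((cmod (f r))\<^sup>2 + (cmod (g r))\<^sup>2)"
      by (simp add: norm_mult)
  qed
qed

lemma inner_coeffs_Top:
  assumes L2: "\<And>i. in_L2 A (\<phi> i)" and f: "in_L2 A f"
  shows "inner_coeffs A \<phi> (Top A \<phi> M f)
           = inner_coeffs A \<phi> f - gram A \<phi> *v (M *v inner_coeffs A \<phi> f)"
proof -
  let ?c = "M *v inner_coeffs A \<phi> f"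
  let ?int = "integral\<^sup>L (lebesgue_on A)"
  have "?int (\<lambda>r. cnj (\<phi> k r) * Top A \<phi> M f r)
          = ?int (\<lambda>r. cnj (\<phi> k r) * f r) - (\<Sum>i\<in>UNIV. ?int (\<lambda>r. cnj (\<phi> k r) * \<phi> i r) * ?c $ i)"
    for k
  proof -
    have "?int (\<lambda>r. cnj (\<phi> k r) * Top A \<phi> M f r)
        = ?int (\<lambda>r. cnj (\<phi> k r) * f r - (\<Sum>i\<in>UNIV. cnj (\<phi> k r) * \<phi> i r * ?c $ i))"
      unfolding Top_eq_inner_coeffs by (simp add: right_diff_distrib sum_distrib_left mult.assoc)
    also have "\<dots> = ?int (\<lambda>r. cnj (\<phi> k r) * f r)
                      - (\<Sum>i\<in>UNIV. ?int (\<lambda>r. cnj (\<phi> k r) * \<phi> i r * ?c $ i))"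
      by (simp add: Bochner_Integration.integral_diff Bochner_Integration.integral_sum
          integrable_cnj_mult_in_L2 L2 f)
    finally show ?thesis by simp
  qed
  then show ?thesis
    unfolding inner_coeffs_def gram_def by (simp add: vec_eq_iff matrix_vector_mult_def)
qed

lemma Top_compose:
  assumes L2: "\<And>i. in_L2 A (\<phi> i)" and f: "in_L2 A f"
  shows "Top A \<phi> M (Top A \<phi> N f) r = Top A \<phi> (M + N - M ** gram A \<phi> ** N) f r"
proof -
  let ?c = "inner_coeffs A \<phi> f"
  have "(M + N - M ** gram A \<phi> ** N) *v ?c = N *v ?c + M *v (?c - gram A \<phi> *v (N *v ?c))"
    by (simp add: matrix_vector_mult_add_rdistrib matrix_vector_mult_diff_rdistrib
        matrix_vector_mult_diff_distrib matrix_vector_mul_assoc matrix_mul_assoc)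
  then show ?thesis
    unfolding Top_eq_inner_coeffs[of A \<phi> M] inner_coeffs_Top[OF L2 f] Top_eq_inner_coeffs[of A \<phi> _ f]
    by (simp add: ring_distribs sum.distrib sum_subtractf)
qed

lemma matrix_add_rdistrib: "((A::'a::semiring_1^'n^'m) + B) ** C = A ** C + B ** C"
  by (simp add: vec_eq_iff matrix_matrix_mult_def sum.distrib distrib_right)

lemma matrix_diff_ldistrib: "(A::'a::ring_1^'n^'m) ** (B - C) = A ** B - A ** C"
  by (simp add: vec_eq_iff matrix_matrix_mult_def sum_subtractf right_diff_distrib)

lemma matrix_diff_rdistrib: "((A::'a::ring_1^'n^'m) - B) ** C = A ** C - B ** C"
  by (simp add: vec_eq_iff matrix_matrix_mult_def sum_subtractf left_diff_distrib)

lemma matrix_inv_eqI: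
  fixes A :: "'a::semiring_1^'n^'m" and X :: "'a^'m^'n"
  assumes "A ** X = mat 1" "X ** A = mat 1"
  shows "matrix_inv A = X"
proof -
  let ?Y = "matrix_inv A"
  have Y: "A ** ?Y = mat 1 \<and> ?Y ** A = mat 1"
    unfolding matrix_inv_def by (rule someI[of _ X]) (use assms in auto)
  then have "?Y = ?Y ** (A ** X)" using assms by simp
  also have "\<dots> = X" using Y by (simp add: matrix_mul_assoc)
  finally show ?thesis .
qed

lemma rdiag_mult: "rdiag a ** rdiag b = rdiag (\<lambda>n. a n * b n)"
proof -
  have "(\<Sum>k\<in>UNIV. (if i = k then complex_of_real (a i) else 0) * (if k = j then complex_of_real (b k) else 0))
      = (if i = j then complex_of_real (a i * b i) else 0)" for i j
  proof -
    have "(\<Sum>k\<in>UNIV. (if i = k then complex_of_real (a i) else 0) * (if k = j then complex_of_real (b k) else 0))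
        = (\<Sum>k\<in>UNIV. if k = i then complex_of_real (a i) * (if k = j then complex_of_real (b k) else 0) else 0)"
      by (rule sum.cong) auto
    then show ?thesis by simp
  qed
  then show ?thesis unfolding rdiag_def matrix_matrix_mult_def by simp
qed

lemma rdiag_add: "rdiag a + rdiag b = rdiag (\<lambda>n. a n + b n)"
  by (simp add: rdiag_def vec_eq_iff)

lemma rdiag_diff: "rdiag a - rdiag b = rdiag (\<lambda>n. a n - b n)"
  by (simp add: rdiag_def vec_eq_iff)

lemma rdiag_const: "rdiag (\<lambda>_. c) = c *\<^sub>R mat 1"
  unfolding rdiag_def mat_def by (simp add: vec_eq_iff) (simp add: scaleR_conv_of_real)

lemma conj_rdiag_const:
  assumes "U ** ctrans U = mat 1"
  shows "U ** rdiag (\<lambda>_. c) ** ctrans U = c *\<^sub>R mat 1"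
  using assms by (simp add: rdiag_const matrix_scalar_ac scalar_matrix_assoc[symmetric])

lemma conj_rdiag_add:
  "U ** rdiag a ** V + U ** rdiag b ** V = U ** rdiag (\<lambda>n. a n + b n) ** V"
  by (simp only: matrix_add_ldistrib[symmetric] matrix_add_rdistrib[symmetric] rdiag_add)

lemma conj_rdiag_diff:
  "U ** rdiag a ** V - U ** rdiag b ** V = U ** rdiag (\<lambda>n. a n - b n) ** V"
  by (simp only: matrix_diff_ldistrib[symmetric] matrix_diff_rdistrib[symmetric] rdiag_diff)

lemma conj_rdiag_mult:
  assumes "ctrans U ** U = mat 1"
  shows "(U ** rdiag a ** ctrans U) ** (U ** rdiag b ** ctrans U) = U ** rdiag (\<lambda>n. a n * b n) ** ctrans U"
proof -
  have "(U ** rdiag a ** ctrans U) ** (U ** rdiag b ** ctrans U)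
      = U ** rdiag a ** (ctrans U ** U) ** rdiag b ** ctrans U"
    by (simp add: matrix_mul_assoc)
  also have "\<dots> = U ** (rdiag a ** rdiag b) ** ctrans U"
    using assms by (simp add: matrix_mul_assoc)
  finally show ?thesis by (simp add: rdiag_mult)
qed

lemma conj_rdiag_compose:
  assumes "ctrans U ** U = mat 1"
  shows "U ** rdiag a ** ctrans U + U ** rdiag b ** ctrans U
           - (U ** rdiag a ** ctrans U) ** (U ** rdiag l ** ctrans U) ** (U ** rdiag b ** ctrans U)
         = U ** rdiag (\<lambda>n. a n + b n - a n * l n * b n) ** ctrans U"
  by (simp only: conj_rdiag_mult[OF assms] conj_rdiag_add conj_rdiag_diff)

lemma matrix_inv_conj_rdiag:
  assumes "U ** ctrans U = mat 1" "ctrans U ** U = mat 1" and "\<And>n. d n \<noteq> 0"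
  shows "matrix_inv (U ** rdiag d ** ctrans U) = U ** rdiag (\<lambda>n. 1 / d n) ** ctrans U"
proof (rule matrix_inv_eqI)
  have "rdiag (\<lambda>n. d n * (1 / d n)) = rdiag (\<lambda>_. 1)" "rdiag (\<lambda>n. 1 / d n * d n) = rdiag (\<lambda>_. 1)"
    using assms(3) by (intro arg_cong[where f = rdiag] ext; simp)+
  then show "(U ** rdiag d ** ctrans U) ** (U ** rdiag (\<lambda>n. 1 / d n) ** ctrans U) = mat 1"
    "(U ** rdiag (\<lambda>n. 1 / d n) ** ctrans U) ** (U ** rdiag d ** ctrans U) = mat 1"
    by (simp_all only: conj_rdiag_mult[OF assms(2)] conj_rdiag_const[OF assms(1)] scaleR_one)
qed

lemma double_minus_quadratic:
  fixes l m :: real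
  assumes "l \<noteq> 0"
  shows "m + m - m * l * m = (1 - (1 - l * m)\<^sup>2) / l"
  using assms by (simp add: field_simps power2_eq_square)

lemma resolvent_sqrt_coeff:
  fixes l :: real
  assumes l: "l > 0"
  defines "m \<equiv> (1 + sqrt (1 + l)) / (l * sqrt (1 + l))"
  shows "m + m - m * l * m = 1 / (1 + l)"
proof -
  have s: "sqrt (1 + l) > 0" "(sqrt (1 + l))\<^sup>2 = 1 + l" using l by auto
  have "1 - l * m = - 1 / sqrt (1 + l)" using l s unfolding m_def by (simp add: field_simps)
  then have sq: "(1 - l * m)\<^sup>2 = 1 / (1 + l)" using s by (simp add: power_divide)
  have "m + m - m * l * m = (1 - (1 - l * m)\<^sup>2) / l"
    by (rule double_minus_quadratic) (use l in simp)
  also have "\<dots> = (1 - 1 / (1 + l)) / l" by (simp only: sq)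
  also have "\<dots> = 1 / (1 + l)" using l by (simp add: divide_simps)
  finally show ?thesis .
qed

lemma minus_one_sqrt_coeff:
  fixes l :: real
  assumes l: "l > 0"
  defines "m \<equiv> (1 + sqrt (1 + l)) / l"
  shows "m + m - m * l * m = - 1"
proof -
  have sq: "(1 - l * m)\<^sup>2 = 1 + l" using l unfolding m_def by simp
  have "m + m - m * l * m = (1 - (1 - l * m)\<^sup>2) / l"
    by (rule double_minus_quadratic) (use l in simp)
  also have "\<dots> = (1 - (1 + l)) / l" by (simp only: sq)
  also have "\<dots> = - 1" using l by simp
  finally show ?thesis .
qed

theorem corollary1:
  fixes A :: "(real^3) set"
    and \<phi> :: "'n::finite \<Rightarrow> real^3 \<Rightarrow> complex"
    and U :: "complex^'n^'n"
    and lam :: "'n \<Rightarrow> real"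
  assumes A_meas: "A \<in> sets lebesgue"
    and L2: "\<And>i. in_L2 A (\<phi> i)"
    and nonpar: "\<And>i j. i \<noteq> j \<Longrightarrow>
          \<not> (\<exists>a b. (a, b) \<noteq> (0::complex, 0::complex) \<and>
               (AE r in lebesgue_on A. a * \<phi> i r + b * \<phi> j r = 0))"
    and posdef: "\<And>x::complex^'n. x \<noteq> 0 \<Longrightarrow>
          0 < Re (\<Sum>i\<in>UNIV. cnj (x $ i) * (gram A \<phi> *v x) $ i)"
    and unitary: "U ** ctrans U = mat 1" "ctrans U ** U = mat 1"
    and eig: "gram A \<phi> = U ** rdiag lam ** ctrans U"
    and lpos: "\<And>n. lam n > 0"
  defines "Bbar \<equiv> U ** rdiag (\<lambda>n. (1 + sqrt (1 + lam n)) / (lam n * sqrt (1 + lam n))) ** ctrans U"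
    and "B \<equiv> U ** rdiag (\<lambda>n. (1 + sqrt (1 + lam n)) / lam n) ** ctrans U"
    and "Cbar \<equiv> matrix_inv (mat 1 + gram A \<phi>)"
    and "C \<equiv> - (mat 1 :: complex^'n^'n)"
  shows "\<forall>f. in_L2 A f \<longrightarrow>
            (\<forall>r\<in>A. Top A \<phi> Bbar (Top A \<phi> Bbar f) r = Top A \<phi> Cbar f r)
          \<and> (\<forall>r\<in>A. Top A \<phi> B (Top A \<phi> B f) r = Top A \<phi> C f r)"
proof -
  let ?G = "gram A \<phi>"
  have one: "mat 1 = U ** rdiag (\<lambda>_. 1) ** ctrans U"
    using conj_rdiag_const[OF unitary(1), of 1] by simp
  have "mat 1 + ?G = U ** rdiag (\<lambda>n. 1 + lam n) ** ctrans U"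
    unfolding eig by (subst one) (rule conj_rdiag_add)
  moreover have "1 + lam n \<noteq> 0" for n
    using lpos[of n] by linarith
  ultimately have Cbar: "Cbar = U ** rdiag (\<lambda>n. 1 / (1 + lam n)) ** ctrans U"
    unfolding Cbar_def using matrix_inv_conj_rdiag[OF unitary] by simp
  have Bbar_sq: "Bbar + Bbar - Bbar ** ?G ** Bbar = Cbar"
    unfolding Bbar_def eig conj_rdiag_compose[OF unitary(2)] Cbar
    by (simp only: resolvent_sqrt_coeff lpos)
  have "C = U ** rdiag (\<lambda>_. - 1) ** ctrans U"
    unfolding C_def using conj_rdiag_const[OF unitary(1), of "- 1"] by simp
  then have B_sq: "B + B - B ** ?G ** B = C"
    unfolding B_def eig conj_rdiag_compose[OF unitary(2)]
    by (simp only: minus_one_sqrt_coeff lpos)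
  show ?thesis
    using Top_compose[where \<phi> = \<phi> and M = Bbar and N = Bbar, OF L2]
      Top_compose[where \<phi> = \<phi> and M = B and N = B, OF L2]
    unfolding Bbar_sq B_sq by blast
qed

end
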